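(* Let $\sigma$ and $\tau$ be possibly empty connected non-crossing partitions. Then $1[\sigma]1[\tau]$ and $1[\tau]1[\sigma]$ are nc-equivalent, i.e. for every $n\ge0$ the number of partitions of $[n]$ avoiding both $1212$ and $1[\sigma]1[\tau]$ equals the number avoiding both $1212$ and $1[\tau]1[\sigma]$.
   Context: Set partitions are written in canonical sequential form (restricted growth words). Pattern containment means having a subsequence order-isomorphic to the pattern; a partition is non-crossing if it avoids $1212$. Bracket notation: in a word built from letters and bracketed partitions, $[\sigma]$ stands for $\sigma+r$ (add $r$ to every letter), where $r$ is the number of distinct symbols appearing before it (e.g. $1[12]1[1]=12314$; for empty $\sigma$, $1[\sigma]1[\tau]=11[\tau]$). $\alpha[\beta]$ is $\alpha$ followed by $\beta$ shifted by the number of blocks of $\alpha$; a partition is connected if it cannot be written as $\alpha[\beta]$ with $\alpha,\beta$ nonempty. *)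

theory Defs
  imports Main "HOL-Library.Sublist"
begin

text \<open>Set partitions of [n] in canonical sequential form (restricted growth words):
  letters are positive, the first letter is 1, and each letter is at most one more
  than the maximum of the preceding letters.\<close>
definition rgs :: "nat list \<Rightarrow> bool" where
  "rgs w \<longleftrightarrow> (\<forall>i < length w. 1 \<le> w ! i \<and> w ! i \<le> Suc (Max (insert 0 (set (take i w)))))"

definition nblocks :: "nat list \<Rightarrow> nat" where
  "nblocks w = card (set w)"

definition shift :: "nat \<Rightarrow> nat list \<Rightarrow> nat list" where
  "shift r w = map (\<lambda>x. x + r) w"

definition bconcat :: "nat list \<Rightarrow> nat list \<Rightarrow> nat list" where
  "bconcat a b = a @ shift (nblocks a) b"

definition one_br_one_br :: "nat list \<Rightarrow> nat list \<Rightarrow> nat list" where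
  "one_br_one_br s t = [1] @ shift 1 s @ [1] @ shift (1 + nblocks s) t"

definition order_iso :: "nat list \<Rightarrow> nat list \<Rightarrow> bool" where
  "order_iso u v \<longleftrightarrow> length u = length v \<and>
     (\<forall>i < length u. \<forall>j < length u. (u ! i \<le> u ! j) = (v ! i \<le> v ! j))"

definition contains :: "nat list \<Rightarrow> nat list \<Rightarrow> bool" where
  "contains w p \<longleftrightarrow> (\<exists>s. subseq s w \<and> order_iso s p)"

definition avoids :: "nat list \<Rightarrow> nat list \<Rightarrow> bool" where
  "avoids w p \<longleftrightarrow> \<not> contains w p"

definition noncrossing :: "nat list \<Rightarrow> bool" where
  "noncrossing w \<longleftrightarrow> avoids w [1,2,1,2]"

definition connected_part :: "nat list \<Rightarrow> bool" where
  "connected_part w \<longleftrightarrow> w \<noteq> [] \<and>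
     \<not> (\<exists>a b. rgs a \<and> rgs b \<and> a \<noteq> [] \<and> b \<noteq> [] \<and> w = bconcat a b)"

definition nc_count :: "nat list \<Rightarrow> nat \<Rightarrow> nat" where
  "nc_count p n = card {w. rgs w \<and> length w = n \<and> avoids w [1,2,1,2] \<and> avoids w p}"

end

theory Submission
  imports Defs "HOL-Computational_Algebra.Formal_Power_Series"
begin

text \<open>Every nonempty non-crossing partition \<open>v\<close> factors uniquely as \<open>v = arc_join u w\<close>, where
  \<open>u\<close> is the partition nested under the first arc of block 1 and \<open>w\<close> is what remains once that
  arc is contracted. For connected \<open>\<sigma>\<close> and \<open>\<tau>\<close>, an occurrence of \<open>1[\<sigma>]1[\<tau>]\<close> in \<open>arc_join u w\<close>
  lies in \<open>u\<close>, lies in \<open>w\<close>, or takes \<open>\<sigma>\<close> from \<open>u\<close> and \<open>\<tau>\<close> from \<open>w\<close> minus its first block.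
  For the generating functions \<open>V\<close>, \<open>A\<close>, \<open>B\<close> of non-crossing partitions avoiding \<open>1[\<sigma>]1[\<tau>]\<close>,
  \<open>\<sigma>\<close>, \<open>\<tau>\<close>, and \<open>W\<close> of the nonempty ones avoiding \<open>1[\<sigma>]1[\<tau>]\<close> that also avoid \<open>\<tau>\<close> after
  deleting their first block, this gives \<open>V = 1 + x (V + A (V - 1) + (V - A) W)\<close> and
  \<open>W = x B (1 + W)\<close>. Eliminating \<open>W\<close> yields \<open>V (1 - x - x A - x B + x\<^sup>2 A B) = 1 - x A - x B\<close>,
  which is symmetric in \<open>\<sigma>\<close> and \<open>\<tau>\<close>.\<close>

unbundle fps_syntax

section \<open>Order isomorphism and pattern containment\<close>

lemma order_iso_iff_map:
  "order_iso s p \<longleftrightarrow> (\<exists>g. strict_mono_on (set p) g \<and> s = map g p)"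
proof
  assume "\<exists>g. strict_mono_on (set p) g \<and> s = map g p"
  then obtain g where "strict_mono_on (set p) g" "s = map g p" by blast
  then show "order_iso s p"
    by (auto simp: order_iso_def strict_mono_on_less_eq)
next
  assume iso: "order_iso s p"
  then have len: "length s = length p" by (simp add: order_iso_def)
  define g where "g v = s ! (SOME i. i < length p \<and> p ! i = v)" for v
  have g_nth: "g (p ! k) = s ! k" if "k < length p" for k
  proof -
    define i where "i = (SOME i. i < length p \<and> p ! i = p ! k)"
    have "\<exists>i. i < length p \<and> p ! i = p ! k" using that by blast
    from someI_ex[OF this] have i: "i < length p" "p ! i = p ! k" by (auto simp: i_def)
    have "s ! i \<le> s ! k" "s ! k \<le> s ! i" using iso i that len by (auto simp: order_iso_def)
    then show ?thesis by (simp add: g_def i_def[symmetric])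
  qed
  have "s = map g p" using len g_nth by (simp add: list_eq_iff_nth_eq)
  moreover have "strict_mono_on (set p) g"
  proof (rule strict_mono_onI)
    fix a b assume "a \<in> set p" "b \<in> set p" "a < b"
    then obtain i j where ij: "i < length p" "j < length p" "p ! i = a" "p ! j = b"
      by (auto simp: in_set_conv_nth)
    then have "\<not> s ! j \<le> s ! i" using iso \<open>a < b\<close> len by (auto simp: order_iso_def)
    then show "g a < g b" using g_nth ij by auto
  qed
  ultimately show "\<exists>g. strict_mono_on (set p) g \<and> s = map g p" by blast
qed

lemma order_iso_map: "strict_mono_on (set p) g \<Longrightarrow> order_iso (map g p) p"
  by (auto simp: order_iso_iff_map)

lemma order_iso_map_left_iff:
  assumes "strict_mono_on A g" "set x \<subseteq> A"
  shows "order_iso (map g x) q \<longleftrightarrow> order_iso x q"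
proof -
  have "(g (x ! i) \<le> g (x ! j)) = (x ! i \<le> x ! j)" if "i < length x" "j < length x" for i j
    using assms that by (intro strict_mono_on_less_eq) (auto dest: nth_mem)
  then show ?thesis unfolding order_iso_def by auto
qed

lemma set_subseq: "subseq xs ys \<Longrightarrow> set xs \<subseteq> set ys"
  by (induct rule: list_emb.induct) auto

lemma contains_refl: "contains p p"
  by (auto simp: contains_def order_iso_def)

lemma contains_subseq: "subseq x w \<Longrightarrow> contains x p \<Longrightarrow> contains w p"
  by (auto simp: contains_def intro: subseq_order.order_trans)

lemma contains_map_iff:
  assumes "strict_mono_on (set w) g"
  shows "contains (map g w) p \<longleftrightarrow> contains w p"
proof
  assume "contains (map g w) p"
  then obtain s where s: "subseq s (map g w)" "order_iso s p" by (auto simp: contains_def)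
  then obtain z where z: "s = map g z" "subseq z w"
    by (metis nths_map subseq_conv_nths)
  have "set z \<subseteq> set w" using z(2) by (rule set_subseq)
  then have "order_iso z p" using s z order_iso_map_left_iff[OF assms] by simp
  then show "contains w p" using z unfolding contains_def by blast
next
  assume "contains w p"
  then obtain z where z: "subseq z w" "order_iso z p" by (auto simp: contains_def)
  have "set z \<subseteq> set w" using z(1) by (rule set_subseq)
  then have "order_iso (map g z) p" using z order_iso_map_left_iff[OF assms] by simp
  moreover have "subseq (map g z) (map g w)" using z(1) by (rule subseq_map)
  ultimately show "contains (map g w) p" unfolding contains_def by blast
qed

lemma contains_shift_iff [simp]: "contains (shift k w) p \<longleftrightarrow> contains w p"
proof -
  have "strict_mono_on (set w) (\<lambda>x. x + k)" by (rule strict_mono_onI) simp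
  then show ?thesis unfolding shift_def by (rule contains_map_iff)
qed

lemma contains_trans: "contains w p \<Longrightarrow> contains p q \<Longrightarrow> contains w q"
proof -
  assume "contains w p" "contains p q"
  then obtain s t where s: "subseq s w" "order_iso s p" and t: "subseq t p" "order_iso t q"
    by (auto simp: contains_def)
  obtain g where g: "strict_mono_on (set p) g" "s = map g p"
    using s(2) order_iso_iff_map by blast
  have "set t \<subseteq> set p" using t(1) by (rule set_subseq)
  then have "order_iso (map g t) q" using order_iso_map_left_iff[OF g(1)] t(2) by simp
  moreover have "subseq (map g t) s" using subseq_map[OF t(1), of g] g(2) by simp
  then have "subseq (map g t) w" using s(1) by (rule subseq_order.order_trans)
  ultimately show ?thesis unfolding contains_def by blast
qed

lemma contains_Nil_right [simp]: "contains w []"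
  by (auto simp: contains_def order_iso_def intro!: exI[of _ "[]"])

lemma contains_Nil_iff: "contains [] p \<longleftrightarrow> p = []"
  by (auto simp: contains_def order_iso_def dest: list_emb_Nil2)

lemma order_iso_1212_iff:
  "order_iso s [1, 2, 1, 2] \<longleftrightarrow> (\<exists>a b :: nat. s = [a, b, a, b] \<and> a < b)"
proof
  assume "order_iso s [1, 2, 1, 2]"
  then obtain g where g: "strict_mono_on (set [1, 2, 1, 2 :: nat]) g" "s = map g [1, 2, 1, 2]"
    using order_iso_iff_map by blast
  have "g 1 < g 2" using g(1) by (simp add: strict_mono_onD)
  then show "\<exists>a b. s = [a, b, a, b] \<and> a < b" using g(2) by auto
next
  assume "\<exists>a b :: nat. s = [a, b, a, b] \<and> a < b"
  then obtain a b :: nat where ab: "s = [a, b, a, b]" "a < b" by blast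
  have "strict_mono_on (set [1, 2, 1, 2 :: nat]) (\<lambda>v. if v = 1 then a else b)"
    using ab(2) by (auto intro!: strict_mono_onI)
  from order_iso_map[OF this] show "order_iso s [1, 2, 1, 2]" using ab(1) by simp
qed

lemma noncrossing_iff: "noncrossing v \<longleftrightarrow> \<not> (\<exists>a b. a < b \<and> subseq [a, b, a, b] v)"
  unfolding noncrossing_def avoids_def contains_def order_iso_1212_iff by blast


section \<open>Restricted growth words\<close>

definition max_letter :: "nat list \<Rightarrow> nat" where
  "max_letter w = Max (insert 0 (set w))"

lemma max_letter_Nil [simp]: "max_letter [] = 0"
  by (simp add: max_letter_def)

lemma max_letter_Cons [simp]: "max_letter (x # w) = max x (max_letter w)"
proof -
  have "insert 0 (set (x # w)) = insert x (insert 0 (set w))" by auto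
  then show ?thesis unfolding max_letter_def by simp
qed

lemma max_letter_append [simp]: "max_letter (a @ b) = max (max_letter a) (max_letter b)"
  by (induct a) (simp_all add: max.assoc)

lemma max_letter_ge: "x \<in> set w \<Longrightarrow> x \<le> max_letter w"
  by (simp add: max_letter_def)

lemma max_letter_le: "(\<And>x. x \<in> set w \<Longrightarrow> x \<le> m) \<Longrightarrow> max_letter w \<le> m"
  by (induct w) auto

lemma max_letter_in: "w \<noteq> [] \<Longrightarrow> max_letter w \<in> set w"
proof (induct w)
  case (Cons x w)
  then show ?case by (cases w) (auto simp: max_def)
qed simp

lemma max_letter_map_mono:
  assumes "w \<noteq> []" and mono: "\<And>x y. x \<in> set w \<Longrightarrow> y \<in> set w \<Longrightarrow> x \<le> y \<Longrightarrow> f x \<le> f y"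
  shows "max_letter (map f w) = f (max_letter w)"
proof (rule antisym)
  show "max_letter (map f w) \<le> f (max_letter w)"
  proof (rule max_letter_le)
    fix y assume "y \<in> set (map f w)"
    then obtain x where "x \<in> set w" "y = f x" by auto
    then show "y \<le> f (max_letter w)" using mono max_letter_in[OF assms(1)] max_letter_ge by blast
  qed
  show "f (max_letter w) \<le> max_letter (map f w)"
    using max_letter_in[OF assms(1)] by (auto intro: max_letter_ge)
qed

lemma rgs_Nil [simp]: "rgs []"
  by (simp add: rgs_def)

lemma rgs_snoc: "rgs (w @ [x]) \<longleftrightarrow> rgs w \<and> 1 \<le> x \<and> x \<le> Suc (max_letter w)"
proof -
  define C where "C v i \<longleftrightarrow> 1 \<le> v ! i \<and> v ! i \<le> Suc (Max (insert 0 (set (take i v))))"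
    for v i
  have rgs_C: "rgs v \<longleftrightarrow> (\<forall>i < length v. C v i)" for v unfolding rgs_def C_def by simp
  have "C (w @ [x]) i = C w i" if "i < length w" for i
    using that unfolding C_def by (simp add: nth_append)
  moreover have "C (w @ [x]) (length w) \<longleftrightarrow> 1 \<le> x \<and> x \<le> Suc (max_letter w)"
    unfolding C_def max_letter_def by simp
  ultimately show ?thesis unfolding rgs_C by (auto simp: less_Suc_eq)
qed

lemma rgs_singleton [simp]: "rgs [1]"
  using rgs_snoc[of "[]" 1] by simp

lemma rgs_prefix: "rgs (a @ b) \<Longrightarrow> rgs a"
  by (induct b rule: rev_induct) (simp_all add: rgs_snoc flip: append_assoc)

lemma rgs_Cons: "rgs (x # w) \<Longrightarrow> x = 1"
  using rgs_prefix[of "[x]" w] rgs_snoc[of "[]" x] by simp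

lemma set_rgs: "rgs w \<Longrightarrow> set w = {1..max_letter w}"
proof (induct w rule: rev_induct)
  case (snoc x w)
  then have sw: "set w = {1..max_letter w}" and x: "1 \<le> x" "x \<le> Suc (max_letter w)"
    by (auto simp: rgs_snoc)
  show ?case
  proof (cases "x \<le> max_letter w")
    case True
    then have "set (w @ [x]) = {1..max_letter w}" using sw x by (simp add: insert_absorb)
    then show ?thesis using True by (simp add: max_def)
  next
    case False
    then have x': "x = Suc (max_letter w)" using x by simp
    have "set (w @ [x]) = insert (Suc (max_letter w)) {1..max_letter w}" using sw x' by simp
    also have "\<dots> = {1..Suc (max_letter w)}" by (rule atLeastAtMostSuc_conv[symmetric]) simp
    finally show ?thesis using x' by (simp add: max_def)
  qed
qed simp

lemma rgs_pos: "rgs w \<Longrightarrow> x \<in> set w \<Longrightarrow> 1 \<le> x"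
  using set_rgs by fastforce

lemma nblocks_rgs: "rgs w \<Longrightarrow> nblocks w = max_letter w"
  by (simp add: nblocks_def set_rgs)

lemma rgs_le_nblocks: "rgs w \<Longrightarrow> x \<in> set w \<Longrightarrow> x \<le> nblocks w"
  by (simp add: nblocks_rgs max_letter_ge)

lemma rgs_append_relabel:
  assumes "rgs (a @ d)" "rgs b"
    and mono: "\<And>x y. x \<in> set d \<Longrightarrow> y \<in> set d \<Longrightarrow> x \<le> y \<Longrightarrow> g x \<le> g y"
    and step: "\<And>x y. x \<in> set d \<Longrightarrow> y \<in> set d \<Longrightarrow> Suc (max_letter a) < y \<Longrightarrow> y \<le> Suc x
                 \<Longrightarrow> g y \<le> Suc (g x)"
    and low: "\<And>y. y \<in> set d \<Longrightarrow> y \<le> Suc (max_letter a) \<Longrightarrow> g y \<le> Suc (max_letter b)"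
    and pos: "\<And>y. y \<in> set d \<Longrightarrow> 1 \<le> g y"
  shows "rgs (b @ map g d)"
  using assms(1) mono step low pos
proof (induction d rule: rev_induct)
  case Nil
  show ?case using assms(2) by simp
next
  case (snoc y d)
  have rd: "rgs (a @ d)" and y: "y \<le> Suc (max (max_letter a) (max_letter d))"
    using snoc.prems(1) by (simp_all add: rgs_snoc flip: append_assoc)
  have IH: "rgs (b @ map g d)"
    by (rule snoc.IH[OF rd]) (rule snoc.prems; auto)+
  have "g y \<le> Suc (max (max_letter b) (max_letter (map g d)))"
  proof (cases "y \<le> Suc (max_letter a)")
    case True
    then show ?thesis using snoc.prems(4)[of y] by simp
  next
    case False
    then have d: "d \<noteq> []" "y \<le> Suc (max_letter d)" "Suc (max_letter a) < y" using y by auto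
    have "max_letter (map g d) = g (max_letter d)"
      by (rule max_letter_map_mono[OF d(1)]) (auto intro: snoc.prems(2))
    moreover have "g y \<le> Suc (g (max_letter d))"
      using snoc.prems(3) max_letter_in[OF d(1)] d(2,3) by simp
    ultimately show ?thesis by simp
  qed
  then show ?case using IH snoc.prems(5)[of y] by (simp add: rgs_snoc flip: append_assoc)
qed

lemma rgs_Cons_1:
  assumes "rgs w"
  shows "rgs (1 # w)"
proof -
  have "rgs ([1] @ map (\<lambda>x. x) w)"
    by (rule rgs_append_relabel[OF _ rgs_singleton, of "[]"]) (use assms rgs_pos in auto)
  then show ?thesis by simp
qed

lemma rgs_Cons_shift: "rgs u \<Longrightarrow> rgs (1 # shift 1 u)"
  using rgs_append_relabel[OF _ rgs_singleton, of "[]" u "\<lambda>x. x + 1"] by (simp add: shift_def)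

lemma rgs_bconcat_split:
  assumes "rgs (a @ b)" "a \<noteq> []" "\<forall>x\<in>set a. \<forall>y\<in>set b. x < y"
  shows "rgs (map (\<lambda>y. y - nblocks a) b) \<and> a @ b = bconcat a (map (\<lambda>y. y - nblocks a) b)"
proof -
  have m: "nblocks a = max_letter a" using rgs_prefix[OF assms(1)] by (rule nblocks_rgs)
  have gt: "\<forall>y\<in>set b. max_letter a < y" using assms(3) max_letter_in[OF assms(2)] by blast
  have "rgs ([] @ map (\<lambda>y. y - max_letter a) b)"
    by (rule rgs_append_relabel[OF assms(1)]) (use gt in auto)
  moreover have "map (\<lambda>y. y - max_letter a + max_letter a) b = b"
    using gt by (induct b) auto
  ultimately show ?thesis by (simp add: m bconcat_def shift_def comp_def)
qed

section \<open>Connected patterns\<close>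

lemma connected_order_iso_split:
  assumes "rgs \<tau>" "\<tau> = [] \<or> connected_part \<tau>" "order_iso (x1 @ x2) \<tau>"
    and sep: "\<forall>a\<in>set x1. \<forall>b\<in>set x2. a < b"
  shows "x1 = [] \<or> x2 = []"
proof (rule ccontr)
  assume ne: "\<not> (x1 = [] \<or> x2 = [])"
  obtain g where g: "strict_mono_on (set \<tau>) g" "x1 @ x2 = map g \<tau>"
    using assms(3) order_iso_iff_map by blast
  define k where "k = length x1"
  have x1: "x1 = map g (take k \<tau>)" and x2: "x2 = map g (drop k \<tau>)"
    using g(2) unfolding k_def by (metis append_eq_conv_conj take_map drop_map)+
  have "a < b" if "a \<in> set (take k \<tau>)" "b \<in> set (drop k \<tau>)" for a b
  proof -
    have "g a < g b" using sep that x1 x2 by auto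
    moreover have "a \<in> set \<tau>" "b \<in> set \<tau>" using that by (auto dest: in_set_takeD in_set_dropD)
    ultimately show "a < b" using strict_mono_on_less[OF g(1)] by blast
  qed
  moreover have ne': "take k \<tau> \<noteq> []" "drop k \<tau> \<noteq> []" using x1 x2 ne by auto
  ultimately have "rgs (map (\<lambda>y. y - nblocks (take k \<tau>)) (drop k \<tau>))"
    "\<tau> = bconcat (take k \<tau>) (map (\<lambda>y. y - nblocks (take k \<tau>)) (drop k \<tau>))"
    using rgs_bconcat_split[of "take k \<tau>" "drop k \<tau>"] assms(1) by auto
  moreover have "rgs (take k \<tau>)" using assms(1) rgs_prefix[of "take k \<tau>" "drop k \<tau>"] by simp
  moreover have "map (\<lambda>y. y - nblocks (take k \<tau>)) (drop k \<tau>) \<noteq> []" "\<tau> \<noteq> []"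
    using ne' by auto
  ultimately show False using assms(2) ne'(1) unfolding connected_part_def by blast
qed

lemma contains_bconcat_iff:
  assumes "rgs a" "\<forall>x\<in>set b. 1 \<le> x" "rgs \<tau>" "\<tau> = [] \<or> connected_part \<tau>"
  shows "contains (bconcat a b) \<tau> \<longleftrightarrow> contains a \<tau> \<or> contains b \<tau>"
proof
  assume "contains (bconcat a b) \<tau>"
  then obtain s where s: "subseq s (a @ shift (nblocks a) b)" "order_iso s \<tau>"
    by (auto simp: contains_def bconcat_def)
  then obtain x1 x2 where x: "s = x1 @ x2" "subseq x1 a" "subseq x2 (shift (nblocks a) b)"
    by (auto elim: subseq_appendE)
  have "y < z" if y: "y \<in> set x1" and z: "z \<in> set x2" for y z
  proof -
    have "y \<le> nblocks a" using rgs_le_nblocks[OF assms(1)] set_subseq[OF x(2)] y by blast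
    moreover obtain z' where "z' \<in> set b" "z = z' + nblocks a"
      using set_subseq[OF x(3)] z by (auto simp: shift_def)
    ultimately show "y < z" using assms(2) by fastforce
  qed
  then have "x1 = [] \<or> x2 = []"
    using connected_order_iso_split[OF assms(3,4)] s(2) x(1) by blast
  moreover have "contains (shift (nblocks a) b) \<tau>" if "x1 = []"
    using s(2) x(1,3) that by (auto simp: contains_def)
  moreover have "contains a \<tau>" if "x2 = []"
    using s(2) x(1,2) that by (auto simp: contains_def)
  ultimately show "contains a \<tau> \<or> contains b \<tau>" by auto
next
  have "subseq a (bconcat a b)" "subseq (shift (nblocks a) b) (bconcat a b)"
    unfolding bconcat_def by (auto intro: subseq_rev_drop_many subseq_drop_many)
  moreover assume "contains a \<tau> \<or> contains b \<tau>"
  ultimately show "contains (bconcat a b) \<tau>"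
    using contains_subseq contains_shift_iff by metis
qed


lemma one_br_one_br_eq:
  "one_br_one_br \<sigma> \<tau> = 1 # shift 1 \<sigma> @ 1 # shift (Suc (nblocks \<sigma>)) \<tau>"
  by (simp add: one_br_one_br_def)

text \<open>The word \<open>c # s1 @ c # s2\<close> is an occurrence of \<open>1[\<sigma>]1[\<tau>]\<close>, with \<open>c\<close> playing both
  letters \<open>1\<close>.\<close>

definition nested_occurrence :: "nat list \<Rightarrow> nat list \<Rightarrow> nat \<Rightarrow> nat list \<Rightarrow> nat list \<Rightarrow> bool" where
  "nested_occurrence \<sigma> \<tau> c s1 s2 \<longleftrightarrow> order_iso s1 \<sigma> \<and> order_iso s2 \<tau> \<and>
     (\<forall>y\<in>set s1. c < y) \<and> (\<forall>y\<in>set s2. c < y) \<and> (\<forall>y\<in>set s1. \<forall>z\<in>set s2. y < z)"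

lemma strict_mono_on_Un:
  fixes f :: "'a :: linorder \<Rightarrow> 'b :: order"
  assumes "strict_mono_on A f" "strict_mono_on B f" and AB: "\<forall>a\<in>A. \<forall>b\<in>B. a < b \<and> f a < f b"
  shows "strict_mono_on (A \<union> B) f"
proof (rule strict_mono_onI)
  fix a b assume a: "a \<in> A \<union> B" and b: "b \<in> A \<union> B" and "a < b"
  show "f a < f b"
  proof (cases "a \<in> A")
    case True
    then show ?thesis
      using b AB \<open>a < b\<close> strict_mono_onD[OF assms(1)] by blast
  next
    case False
    then have "a \<in> B" using a by simp
    moreover have "b \<in> B" using AB \<open>a \<in> B\<close> \<open>a < b\<close> b by (auto dest: less_asym)
    ultimately show ?thesis using \<open>a < b\<close> strict_mono_onD[OF assms(2)] by blast
  qed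
qed

lemma strict_mono_on_shift:
  assumes "strict_mono_on (set w) g" "\<And>x. x \<in> set w \<Longrightarrow> G (x + k) = g x"
  shows "strict_mono_on (set (shift k w)) G"
proof (rule strict_mono_onI)
  fix a b assume "a \<in> set (shift k w)" "b \<in> set (shift k w)" "a < b"
  then obtain x y where "x \<in> set w" "y \<in> set w" "a = x + k" "b = y + k" "x < y"
    by (auto simp: shift_def)
  then show "G a < G b" by (simp add: assms(2) strict_mono_onD[OF assms(1)])
qed

lemma order_iso_one_br_one_br_imp:
  assumes "order_iso s (one_br_one_br \<sigma> \<tau>)" "rgs \<sigma>" "rgs \<tau>"
  shows "\<exists>c s1 s2. s = c # s1 @ c # s2 \<and> nested_occurrence \<sigma> \<tau> c s1 s2"
proof -
  let ?p = "one_br_one_br \<sigma> \<tau>"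
  let ?k = "Suc (nblocks \<sigma>)"
  obtain g where g: "strict_mono_on (set ?p) g" "s = map g ?p"
    using assms(1) order_iso_iff_map by blast
  have lt: "g a < g b" if "a \<in> set ?p" "b \<in> set ?p" "a < b" for a b
    using g(1) that by (simp add: strict_mono_onD)
  define s1 where "s1 = map (\<lambda>x. g (x + 1)) \<sigma>"
  define s2 where "s2 = map (\<lambda>x. g (x + ?k)) \<tau>"
  have "s = g 1 # s1 @ g 1 # s2"
    using g(2) by (simp add: one_br_one_br_eq s1_def s2_def shift_def)
  moreover have "order_iso s1 \<sigma>" "order_iso s2 \<tau>" unfolding s1_def s2_def
    by (rule order_iso_map, rule strict_mono_onI, rule lt, auto simp: one_br_one_br_eq shift_def)+
  moreover have "\<forall>y\<in>set s1. g 1 < y" "\<forall>y\<in>set s2. g 1 < y"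
    using rgs_pos[OF assms(2)] rgs_pos[OF assms(3)] unfolding s1_def s2_def
    by (auto intro!: lt simp: one_br_one_br_eq shift_def Suc_le_eq)
  moreover have "y < z" if y: "y \<in> set s1" and z: "z \<in> set s2" for y z
  proof -
    obtain x where x: "x \<in> set \<sigma>" "y = g (x + 1)" using y unfolding s1_def by auto
    obtain t where t: "t \<in> set \<tau>" "z = g (t + ?k)" using z unfolding s2_def by auto
    have "x + 1 < t + ?k" using rgs_le_nblocks[OF assms(2) x(1)] rgs_pos[OF assms(3) t(1)] by simp
    then show "y < z" using lt x t by (simp add: one_br_one_br_eq shift_def)
  qed
  ultimately show ?thesis unfolding nested_occurrence_def by blast
qed

lemma nested_occurrence_imp_order_iso:
  assumes occ: "nested_occurrence \<sigma> \<tau> c s1 s2" and "rgs \<sigma>" "rgs \<tau>"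
  shows "order_iso (c # s1 @ c # s2) (one_br_one_br \<sigma> \<tau>)"
proof -
  let ?k = "Suc (nblocks \<sigma>)"
  let ?S = "set (shift 1 \<sigma>)" and ?T = "set (shift ?k \<tau>)"
  have iso: "order_iso s1 \<sigma>" "order_iso s2 \<tau>" using occ by (simp_all add: nested_occurrence_def)
  obtain g1 where g1: "strict_mono_on (set \<sigma>) g1" "s1 = map g1 \<sigma>"
    using iso(1) order_iso_iff_map by blast
  obtain g2 where g2: "strict_mono_on (set \<tau>) g2" "s2 = map g2 \<tau>"
    using iso(2) order_iso_iff_map by blast
  define G where "G v = (if v = 1 then c else if v \<le> ?k then g1 (v - 1) else g2 (v - ?k))" for v
  have S: "a \<in> ?S \<longleftrightarrow> (\<exists>x\<in>set \<sigma>. a = x + 1)" for a by (auto simp: shift_def)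
  have T: "b \<in> ?T \<longleftrightarrow> (\<exists>y\<in>set \<tau>. b = y + ?k)" for b by (auto simp: shift_def)
  have G\<sigma>: "G (x + 1) = g1 x" if "x \<in> set \<sigma>" for x
    using rgs_pos[OF assms(2) that] rgs_le_nblocks[OF assms(2) that] by (simp add: G_def)
  have G\<tau>: "G (y + ?k) = g2 y" if "y \<in> set \<tau>" for y
    using rgs_pos[OF assms(3) that] by (simp add: G_def)
  have GS: "G a \<in> set s1" "1 < a" if "a \<in> ?S" for a
    using that G\<sigma> g1(2) rgs_pos[OF assms(2)] unfolding S by force+
  have GT: "G b \<in> set s2" "1 < b" if "b \<in> ?T" for b
    using that G\<tau> g2(2) rgs_pos[OF assms(3)] unfolding T by force+
  have "strict_mono_on ?S G" using g1(1) G\<sigma> by (rule strict_mono_on_shift)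
  moreover have "strict_mono_on ?T G" using g2(1) G\<tau> by (rule strict_mono_on_shift)
  moreover have "\<forall>a\<in>?S. \<forall>b\<in>?T. a < b \<and> G a < G b"
  proof (intro ballI conjI)
    fix a b assume "a \<in> ?S" "b \<in> ?T"
    then obtain x y where "x \<in> set \<sigma>" "y \<in> set \<tau>" "a = x + 1" "b = y + ?k"
      unfolding S T by blast
    then show "a < b" using rgs_le_nblocks[OF assms(2)] rgs_pos[OF assms(3)] by fastforce
    show "G a < G b" using GS GT occ \<open>a \<in> ?S\<close> \<open>b \<in> ?T\<close> by (simp add: nested_occurrence_def)
  qed
  ultimately have mono_ST: "strict_mono_on (?S \<union> ?T) G" by (rule strict_mono_on_Un)
  have "G 1 = c" by (simp add: G_def)
  then have "\<forall>a\<in>{1}. \<forall>b\<in>?S \<union> ?T. a < b \<and> G a < G b"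
    using GS GT occ by (auto simp: nested_occurrence_def)
  moreover have "strict_mono_on {1} G" by (rule strict_mono_onI) simp
  ultimately have "strict_mono_on ({1} \<union> (?S \<union> ?T)) G"
    using strict_mono_on_Un mono_ST by blast
  moreover have "set (one_br_one_br \<sigma> \<tau>) = {1} \<union> (?S \<union> ?T)"
    by (auto simp: one_br_one_br_eq)
  ultimately have mono: "strict_mono_on (set (one_br_one_br \<sigma> \<tau>)) G" by simp
  have "map G (shift 1 \<sigma>) = s1" "map G (shift ?k \<tau>) = s2"
    using G\<sigma> G\<tau> by (simp_all add: g1(2) g2(2) shift_def cong: map_cong)
  then have "map G (one_br_one_br \<sigma> \<tau>) = c # s1 @ c # s2"
    by (simp add: one_br_one_br_eq G_def)
  then show ?thesis using order_iso_map[OF mono] by simp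
qed

lemma contains_one_br_one_br_iff:
  assumes "rgs \<sigma>" "rgs \<tau>"
  shows "contains w (one_br_one_br \<sigma> \<tau>) \<longleftrightarrow>
    (\<exists>c s1 s2. nested_occurrence \<sigma> \<tau> c s1 s2 \<and> subseq (c # s1 @ c # s2) w)"
  unfolding contains_def
  using order_iso_one_br_one_br_imp[OF _ assms] nested_occurrence_imp_order_iso[OF _ assms]
  by metis

lemma contains_one_br_one_br_left: "contains (one_br_one_br \<sigma> \<tau>) \<sigma>"
proof -
  have "subseq (shift 1 \<sigma>) (one_br_one_br \<sigma> \<tau>)"
    unfolding one_br_one_br_eq by (intro list_emb_Cons subseq_rev_drop_many subseq_order.order_refl)
  moreover have "contains (shift 1 \<sigma>) \<sigma>" by (simp add: contains_refl)
  ultimately show ?thesis by (rule contains_subseq)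
qed

lemma contains_one_br_one_br_right: "contains (one_br_one_br \<sigma> \<tau>) \<tau>"
proof -
  have "subseq (shift (Suc (nblocks \<sigma>)) \<tau>) (one_br_one_br \<sigma> \<tau>)"
    unfolding one_br_one_br_eq by (intro list_emb_Cons subseq_drop_many subseq_order.order_refl)
  moreover have "contains (shift (Suc (nblocks \<sigma>)) \<tau>) \<tau>" by (simp add: contains_refl)
  ultimately show ?thesis by (rule contains_subseq)
qed


section \<open>The first-arc decomposition\<close>

definition raise_above_1 :: "nat \<Rightarrow> nat \<Rightarrow> nat" where
  "raise_above_1 k x = (if x = 1 then 1 else x + k)"

text \<open>For nonempty \<open>w\<close>, the first block of \<open>arc_join u w\<close> is that of \<open>w\<close> together with a new
  leading element, the partition \<open>u\<close> sits nested under the arc from this element to the next one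
  of its block, and the remaining blocks of \<open>w\<close> are numbered after those of \<open>u\<close>.\<close>

definition arc_join :: "nat list \<Rightarrow> nat list \<Rightarrow> nat list" where
  "arc_join u w = 1 # shift 1 u @ map (raise_above_1 (nblocks u)) w"

definition delete_block1 :: "nat list \<Rightarrow> nat list" where
  "delete_block1 w = map (\<lambda>x. x - 1) (filter (\<lambda>x. x \<noteq> 1) w)"

lemma length_arc_join [simp]: "length (arc_join u w) = Suc (length u + length w)"
  by (simp add: arc_join_def shift_def)

lemma set_delete_block1_rgs: "rgs w \<Longrightarrow> y \<in> set (delete_block1 w) \<Longrightarrow> 1 \<le> y"
  using rgs_pos by (fastforce simp: delete_block1_def)

lemma set_shift_1_rgs: "rgs u \<Longrightarrow> y \<in> set (shift 1 u) \<Longrightarrow> 2 \<le> y \<and> y \<le> Suc (nblocks u)"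
  using rgs_pos rgs_le_nblocks by (fastforce simp: shift_def)

lemma set_map_raise_above_1:
  "rgs w \<Longrightarrow> y \<in> set (map (raise_above_1 k) w) \<Longrightarrow> y = 1 \<or> k + 2 \<le> y"
  using rgs_pos by (fastforce simp: raise_above_1_def)

lemma shift_1_less_raise_above_1:
  assumes "rgs u" "rgs w" "x \<in> set (shift 1 u)" "y \<in> set (map (raise_above_1 (nblocks u)) w)" "y \<noteq> 1"
  shows "x < y"
  using set_shift_1_rgs[OF assms(1,3)] set_map_raise_above_1[OF assms(2,4)] assms(5) by simp

lemma strict_mono_on_raise_above_1:
  "(\<And>x. x \<in> A \<Longrightarrow> 1 \<le> x) \<Longrightarrow> strict_mono_on A (raise_above_1 k)"
  by (fastforce simp: raise_above_1_def intro: strict_mono_onI)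

lemma contains_map_raise_above_1_iff:
  "rgs w \<Longrightarrow> contains (map (raise_above_1 k) w) p \<longleftrightarrow> contains w p"
  by (rule contains_map_iff[OF strict_mono_on_raise_above_1]) (rule rgs_pos)

lemma map_raise_above_1_Cons:
  "rgs w \<Longrightarrow> w \<noteq> [] \<Longrightarrow> map (raise_above_1 k) w = 1 # map (raise_above_1 k) (tl w)"
  by (cases w) (auto dest: rgs_Cons simp: raise_above_1_def)

lemma filter_map_raise_above_1:
  assumes "rgs w"
  shows "filter (\<lambda>x. x \<noteq> 1) (map (raise_above_1 k) w) = shift (Suc k) (delete_block1 w)"
proof -
  have "\<forall>x\<in>set v. 1 \<le> x \<Longrightarrow>
      filter (\<lambda>x. x \<noteq> 1) (map (raise_above_1 k) v) = shift (Suc k) (delete_block1 v)" for v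
    by (induct v) (auto simp: raise_above_1_def delete_block1_def shift_def)
  then show ?thesis using rgs_pos[OF assms] by blast
qed

lemma delete_block1_arc_join:
  assumes "rgs u" "rgs w"
  shows "delete_block1 (arc_join u w) = bconcat u (delete_block1 w)"
proof -
  have "filter (\<lambda>x. x \<noteq> 1) (shift 1 u) = shift 1 u"
    using set_shift_1_rgs[OF assms(1)] by (fastforce intro: filter_True)
  then show ?thesis
    using filter_map_raise_above_1[OF assms(2)]
    by (simp add: arc_join_def delete_block1_def bconcat_def shift_def comp_def)
qed

lemma max_letter_Cons_shift_1: "rgs u \<Longrightarrow> max_letter (1 # shift 1 u) = Suc (nblocks u)"
proof (cases "u = []")
  case False
  moreover assume "rgs u"
  moreover have "max_letter (shift 1 u) = Suc (max_letter u)"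
    using False by (simp add: shift_def max_letter_map_mono)
  ultimately show ?thesis by (simp add: nblocks_rgs)
qed (simp add: shift_def nblocks_def)

lemma rgs_arc_join:
  assumes "rgs u" "rgs w"
  shows "rgs (arc_join u w)"
proof -
  have "rgs ((1 # shift 1 u) @ map (raise_above_1 (nblocks u)) w)"
  proof (rule rgs_append_relabel[of "[1]"])
    show "rgs ([1] @ w)" using rgs_Cons_1[OF assms(2)] by simp
    show "rgs (1 # shift 1 u)" using rgs_Cons_shift[OF assms(1)] .
  next
    fix x y assume "x \<in> set w" "y \<in> set w" "x \<le> y"
    then show "raise_above_1 (nblocks u) x \<le> raise_above_1 (nblocks u) y"
      using rgs_pos[OF assms(2) \<open>x \<in> set w\<close>] by (auto simp: raise_above_1_def)
  next
    fix x y assume "x \<in> set w" "Suc (max_letter [1]) < y" "y \<le> Suc x"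
    then show "raise_above_1 (nblocks u) y \<le> Suc (raise_above_1 (nblocks u) x)"
      by (auto simp: raise_above_1_def)
  next
    fix y assume "y \<le> Suc (max_letter [1])"
    then show "raise_above_1 (nblocks u) y \<le> Suc (max_letter (1 # shift 1 u))"
      using max_letter_Cons_shift_1[OF assms(1)] by (auto simp: raise_above_1_def)
  next
    fix y assume "y \<in> set w"
    then show "1 \<le> raise_above_1 (nblocks u) y"
      using rgs_pos[OF assms(2) \<open>y \<in> set w\<close>] by (simp add: raise_above_1_def)
  qed
  then show ?thesis by (simp add: arc_join_def)
qed

lemma subseq_aba_middle:
  assumes "subseq [a, b, a] (l @ m @ r)" "a \<notin> set l" "a \<notin> set r"
  shows "b \<in> set m"
proof -
  obtain x1 x2 where x: "[a, b, a] = x1 @ x2" "subseq x1 l" "subseq x2 (m @ r)"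
    using assms(1) by (auto elim: subseq_appendE)
  have "x1 = []" using x(1,2) assms(2) by (cases x1) (auto dest: set_subseq)
  then obtain y1 y2 where y: "[a, b, a] = y1 @ y2" "subseq y1 m" "subseq y2 r"
    using x(1,3) by (auto elim: subseq_appendE)
  have "y2 = []" using y(1,3) assms(3) by (cases y2 rule: rev_cases) (auto dest: set_subseq)
  then show ?thesis using y(1,2) set_subseq by fastforce
qed

text \<open>The letters of \<open>u\<close> occupy a contiguous segment of \<open>arc_join u w\<close>, so a crossing either
  lies inside that segment or avoids it.\<close>

lemma noncrossing_arc_join:
  assumes u: "rgs u" "noncrossing u" and w: "rgs w" "noncrossing w"
  shows "noncrossing (arc_join u w)"
proof -
  let ?U = "shift 1 u" and ?W = "map (raise_above_1 (nblocks u)) w"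
  have U: "2 \<le> y \<and> y \<le> Suc (nblocks u)" if "y \<in> set ?U" for y
    using set_shift_1_rgs[OF u(1) that] .
  have W: "y \<notin> set ?U" if "y \<in> set ?W" for y
    using set_map_raise_above_1[OF w(1) that] U by fastforce
  have one: "1 \<notin> set ?U" using U by fastforce
  have "noncrossing ?U" "noncrossing ?W"
    using u(2) w(2) contains_map_raise_above_1_iff[OF w(1)]
    by (simp_all add: noncrossing_def avoids_def)
  then have nc: "\<not> subseq [a, b, a, b] ?U" "\<not> subseq [a, b, a, b] ?W" if "a < b" for a b
    using that unfolding noncrossing_iff by blast+
  show ?thesis unfolding noncrossing_iff
  proof clarify
    fix a b assume "a < b" "subseq [a, b, a, b] (arc_join u w)"
    then have v: "subseq [a, b, a, b] ([1] @ ?U @ ?W)" by (simp add: arc_join_def)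
    have "subseq [a, b, a] [a, b, a, b]" "subseq [b, a, b] [a, b, a, b]" by simp_all
    then have aba: "subseq [a, b, a] ([1] @ ?U @ ?W)" "subseq [b, a, b] ([1] @ ?U @ ?W)"
      using v by (blast intro: subseq_order.order_trans)+
    have "a \<in> set ?U \<longleftrightarrow> b \<in> set ?U"
      using subseq_aba_middle[OF aba(1)] subseq_aba_middle[OF aba(2)] U W by fastforce
    then consider "a \<in> set ?U" "b \<in> set ?U" | "a \<notin> set ?U" "b \<notin> set ?U" by blast
    then show False
    proof cases
      case 1
      have "filter (\<lambda>x. x \<in> set ?U) ([1] @ ?U @ ?W) = ?U"
        using one W by (auto intro: filter_True filter_False)
      then have "subseq [a, b, a, b] ?U"
        using subseq_filter[OF v, of "\<lambda>x. x \<in> set ?U"] 1 by simp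
      then show False using nc \<open>a < b\<close> by blast
    next
      case 2
      have "filter (\<lambda>x. x \<notin> set ?U) ([1] @ ?U @ ?W) = 1 # ?W"
        using one W by (auto intro: filter_True filter_False)
      then have sub: "subseq [a, b, a, b] (1 # ?W)"
        using subseq_filter[OF v, of "\<lambda>x. x \<notin> set ?U"] 2 by simp
      then have "w \<noteq> []" using list_emb_length[OF sub] by auto
      then have "subseq [a, b, a, b] ?W"
        using sub \<open>a < b\<close> map_raise_above_1_Cons[OF w(1)] by (cases "a = 1") auto
      then show False using nc \<open>a < b\<close> by blast
    qed
  qed
qed


lemma arc_join_inj:
  assumes "arc_join u w = arc_join u' w'" "rgs u" "rgs u'" "rgs w" "rgs w'"
  shows "u = u' \<and> w = w'"
proof -
  have prefix: "takeWhile (\<lambda>x. x \<noteq> 1) (tl (arc_join u w)) = shift 1 u" if "rgs u" "rgs w" for u w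
  proof -
    have "\<forall>x\<in>set (shift 1 u). x \<noteq> 1" using set_shift_1_rgs[OF that(1)] by fastforce
    moreover have "takeWhile (\<lambda>x. x \<noteq> 1) (map (raise_above_1 (nblocks u)) w) = []"
      using map_raise_above_1_Cons[OF that(2)] by (cases "w = []") auto
    ultimately show ?thesis by (simp add: arc_join_def takeWhile_append2)
  qed
  have "shift 1 u = shift 1 u'" using prefix[OF assms(2,4)] prefix[OF assms(3,5)] assms(1) by simp
  then have u: "u = u'" by (simp add: shift_def)
  have "inj_on (raise_above_1 (nblocks u)) (set w \<union> set w')"
    using rgs_pos assms(4,5) by (blast intro: strict_mono_on_imp_inj_on strict_mono_on_raise_above_1)
  moreover have "map (raise_above_1 (nblocks u)) w = map (raise_above_1 (nblocks u)) w'"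
    using assms(1) u by (simp add: arc_join_def)
  ultimately show ?thesis using u by (simp add: inj_on_map_eq_map)
qed

lemma noncrossing_letters_after_arc:
  assumes "rgs (1 # t @ 1 # d)" "noncrossing (1 # t @ 1 # d)" "y \<in> set d" "y \<noteq> 1"
  shows "max_letter (1 # t) < y"
proof (rule ccontr)
  assume "\<not> max_letter (1 # t) < y"
  moreover have "1 \<le> y" using rgs_pos[OF assms(1)] assms(3) by simp
  ultimately have "y \<in> {1..max_letter (1 # t)}" by (simp only: atLeastAtMost_iff not_less)
  moreover have "set (1 # t) = {1..max_letter (1 # t)}"
    using rgs_prefix[of "1 # t" "1 # d"] assms(1) by (intro set_rgs) simp
  ultimately have "y \<in> set (1 # t)" by (simp only:)
  then have "y \<in> set t" using assms(4) by simp
  then have "subseq ([1] @ [y] @ [1] @ [y]) ([1] @ t @ [1] @ d)"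
    using assms(3) by (intro list_emb_append_mono) (auto simp: subseq_singleton_left)
  then have "subseq [1, y, 1, y] (1 # t @ 1 # d)" by simp
  moreover have "1 < y" using assms(4) \<open>1 \<le> y\<close> by simp
  ultimately show False using assms(2) unfolding noncrossing_iff by blast
qed

lemma arc_join_inner:
  assumes "rgs (1 # t)" "noncrossing (1 # t)" "1 \<notin> set t"
  defines "u \<equiv> map (\<lambda>x. x - 1) t"
  shows "rgs u" "noncrossing u" "shift 1 u = t" "max_letter (1 # t) = Suc (nblocks u)"
proof -
  have t2: "2 \<le> x" if "x \<in> set t" for x
  proof -
    have "1 \<le> x" using rgs_pos[OF assms(1), of x] that by simp
    moreover have "x \<noteq> 1" using that assms(3) by auto
    ultimately show ?thesis by simp
  qed
  show t: "shift 1 u = t"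
    unfolding u_def shift_def map_map by (rule map_idI) (use t2 in fastforce)
  have "rgs ([] @ map (\<lambda>x. x - 1) t)"
    by (rule rgs_append_relabel[of "[1]"]) (use assms(1) t2 in \<open>force+\<close>)
  then show "rgs u" by (simp add: u_def)
  have "noncrossing t"
    using assms(2) contains_subseq[of t "1 # t"] by (auto simp: noncrossing_def avoids_def)
  then show "noncrossing u"
    using t contains_shift_iff[of 1 u] by (simp add: noncrossing_def avoids_def)
  show "max_letter (1 # t) = Suc (nblocks u)"
  proof (cases "t = []")
    case True
    then show ?thesis by (simp add: u_def nblocks_def)
  next
    case False
    have "nblocks u = max_letter u" using \<open>rgs u\<close> by (rule nblocks_rgs)
    also have "\<dots> = max_letter t - 1"
      unfolding u_def using False by (intro max_letter_map_mono) auto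
    finally show ?thesis using t2[OF max_letter_in[OF False]] by simp
  qed
qed

lemma arc_join_outer:
  assumes v: "rgs (1 # t @ 1 # d)" "noncrossing (1 # t @ 1 # d)" and k: "max_letter (1 # t) = Suc k"
  defines "g \<equiv> \<lambda>y. if y = 1 then 1 else y - k"
  shows "rgs (map g (1 # d))" "noncrossing (map g (1 # d))"
    "map (raise_above_1 k) (map g (1 # d)) = 1 # d"
proof -
  have d: "y = 1 \<or> k + 2 \<le> y" if "y \<in> set (1 # d)" for y
  proof (cases "y = 1")
    case False
    then have "max_letter (1 # t) < y"
      using that by (intro noncrossing_letters_after_arc[OF v]) auto
    then have "Suc k < y" by (simp only: k)
    then show ?thesis by simp
  qed simp
  have "rgs ([1] @ map g d)"
  proof (rule rgs_append_relabel[of "1 # t @ [1]"])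
    show "rgs ((1 # t @ [1]) @ d)" using v(1) by simp
  next
    fix x y assume "x \<in> set d" "y \<in> set d" "x \<le> y"
    then show "g x \<le> g y" using d[of x] d[of y] by (auto simp: g_def)
  next
    fix x y assume "x \<in> set d" "y \<in> set d" "Suc (max_letter (1 # t @ [1])) < y" "y \<le> Suc x"
    then show "g y \<le> Suc (g x)" using d[of x] k by (auto simp: g_def)
  next
    fix y assume "y \<in> set d" "y \<le> Suc (max_letter (1 # t @ [1]))"
    then show "g y \<le> Suc (max_letter [1])" using d[of y] k by (auto simp: g_def)
  next
    fix y assume "y \<in> set d"
    then show "1 \<le> g y" using d[of y] by (auto simp: g_def)
  qed (rule rgs_singleton)
  then show "rgs (map g (1 # d))" by (simp add: g_def)
  have "strict_mono_on (set (1 # d)) g"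
  proof (rule strict_mono_onI)
    fix a b assume "a \<in> set (1 # d)" "b \<in> set (1 # d)" "a < b"
    then show "g a < g b" using d[of a] d[of b] by (auto simp: g_def)
  qed
  moreover have "noncrossing (1 # d)"
    using v(2) contains_subseq[of "1 # d" "1 # t @ 1 # d"]
    by (auto simp: noncrossing_def avoids_def subseq_drop_many)
  ultimately show "noncrossing (map g (1 # d))"
    unfolding noncrossing_def avoids_def by (simp only: contains_map_iff not_False_eq_True)
  show "map (raise_above_1 k) (map g (1 # d)) = 1 # d"
    unfolding map_map
  proof (rule map_idI)
    fix y assume "y \<in> set (1 # d)"
    then show "(raise_above_1 k \<circ> g) y = y" using d[of y] by (auto simp: g_def raise_above_1_def)
  qed
qed

lemma arc_join_surj:
  assumes "rgs v" "noncrossing v" "v \<noteq> []"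
  obtains u w where "rgs u" "noncrossing u" "rgs w" "noncrossing w" "v = arc_join u w"
proof -
  obtain rest where v: "v = 1 # rest" using assms rgs_Cons by (cases v) auto
  show ?thesis
  proof (cases "1 \<in> set rest")
    case False
    have "rgs (1 # rest)" "noncrossing (1 # rest)" using assms(1,2) v by simp_all
    note inner = arc_join_inner[OF this False]
    show ?thesis
      by (rule that[of "map (\<lambda>x. x - 1) rest" "[]"])
        (use inner v in \<open>simp_all add: arc_join_def noncrossing_iff\<close>)
  next
    case True
    then obtain t d where rest: "rest = t @ 1 # d" "1 \<notin> set t" by (auto dest: split_list_first)
    have "rgs (1 # t)" using assms(1) v rest rgs_prefix[of "1 # t" "1 # d"] by simp
    moreover have "noncrossing (1 # t)"
      using assms(2) v rest contains_subseq[of "1 # t" v]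
      by (auto simp: noncrossing_def avoids_def subseq_rev_drop_many)
    ultimately have "rgs (1 # t) \<and> noncrossing (1 # t)" by simp
    note inner = arc_join_inner[OF this[THEN conjunct1] this[THEN conjunct2] rest(2)]
    note outer = arc_join_outer[of t d, OF _ _ inner(4)]
    have "v = arc_join (map (\<lambda>x. x - 1) t)
                (map (\<lambda>y. if y = 1 then 1 else y - nblocks (map (\<lambda>x. x - 1) t)) (1 # d))"
      using inner(3) outer(3) assms(1,2) v rest by (simp add: arc_join_def del: list.map)
    then show ?thesis using that inner(1,2) outer(1,2) assms(1,2) v rest by simp
  qed
qed

section \<open>Counting non-crossing partitions\<close>

definition nc_partition :: "nat list \<Rightarrow> bool" where
  "nc_partition w \<longleftrightarrow> rgs w \<and> noncrossing w"

definition nc_card :: "(nat list \<Rightarrow> bool) \<Rightarrow> nat \<Rightarrow> nat" where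
  "nc_card Q n = card {w. nc_partition w \<and> length w = n \<and> Q w}"

definition nc_pair_card :: "(nat list \<Rightarrow> nat list \<Rightarrow> bool) \<Rightarrow> nat \<Rightarrow> nat" where
  "nc_pair_card P n =
     card {(u, w). nc_partition u \<and> nc_partition w \<and> length u + length w = n \<and> P u w}"

definition nc_gf :: "(nat list \<Rightarrow> bool) \<Rightarrow> int fps" where
  "nc_gf Q = Abs_fps (\<lambda>n. int (nc_card Q n))"

definition nc_pair_gf :: "(nat list \<Rightarrow> nat list \<Rightarrow> bool) \<Rightarrow> int fps" where
  "nc_pair_gf P = Abs_fps (\<lambda>n. int (nc_pair_card P n))"

lemma nc_partition_Nil [simp]: "nc_partition []"
  by (simp add: nc_partition_def noncrossing_iff)

lemma nc_partition_letter_le_length: "nc_partition w \<Longrightarrow> x \<in> set w \<Longrightarrow> x \<le> length w"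
  using rgs_le_nblocks[of w x] card_length[of w] by (simp add: nc_partition_def nblocks_def)

lemma finite_nc_partitions_le: "finite {w. nc_partition w \<and> length w \<le> n}"
proof (rule finite_subset)
  show "{w. nc_partition w \<and> length w \<le> n} \<subseteq> {w. set w \<subseteq> {0..n} \<and> length w \<le> n}"
    using nc_partition_letter_le_length by fastforce
  show "finite {w. set w \<subseteq> {0..n} \<and> length w \<le> n}"
    by (rule finite_lists_length_le) simp
qed

lemma finite_nc_partitions: "finite {w. nc_partition w \<and> length w = n \<and> Q w}"
  by (rule finite_subset[OF _ finite_nc_partitions_le[of n]]) auto

lemma finite_nc_pairs:
  "finite {(u, w). nc_partition u \<and> nc_partition w \<and> length u + length w = n \<and> P u w}"
  by (rule finite_subset[OF _ finite_cartesian_product[OF finite_nc_partitions_le[of n]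
        finite_nc_partitions_le[of n]]]) auto

lemma nc_gf_cong:
  assumes "\<And>w. nc_partition w \<Longrightarrow> Q w \<longleftrightarrow> Q' w"
  shows "nc_gf Q = nc_gf Q'"
proof -
  have "{w. nc_partition w \<and> length w = n \<and> Q w} = {w. nc_partition w \<and> length w = n \<and> Q' w}" for n
    using assms by auto
  then show ?thesis by (simp add: nc_gf_def nc_card_def)
qed

lemma nc_pair_gf_cong:
  assumes "\<And>u w. nc_partition u \<Longrightarrow> nc_partition w \<Longrightarrow> P u w \<longleftrightarrow> P' u w"
  shows "nc_pair_gf P = nc_pair_gf P'"
proof -
  have "{(u, w). nc_partition u \<and> nc_partition w \<and> length u + length w = n \<and> P u w} =
      {(u, w). nc_partition u \<and> nc_partition w \<and> length u + length w = n \<and> P' u w}" for n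
    using assms by auto
  then show ?thesis by (simp add: nc_pair_gf_def nc_pair_card_def)
qed

lemma nc_gf_disj:
  assumes "\<And>w. nc_partition w \<Longrightarrow> Q1 w \<Longrightarrow> \<not> Q2 w"
  shows "nc_gf (\<lambda>w. Q1 w \<or> Q2 w) = nc_gf Q1 + nc_gf Q2"
proof (rule fps_ext)
  fix n
  have "{w. nc_partition w \<and> length w = n \<and> (Q1 w \<or> Q2 w)} =
      {w. nc_partition w \<and> length w = n \<and> Q1 w} \<union> {w. nc_partition w \<and> length w = n \<and> Q2 w}"
    by auto
  then have "nc_card (\<lambda>w. Q1 w \<or> Q2 w) n = nc_card Q1 n + nc_card Q2 n"
    unfolding nc_card_def using assms
    by (simp only:) (rule card_Un_disjoint, auto simp: finite_nc_partitions)
  then show "nc_gf (\<lambda>w. Q1 w \<or> Q2 w) $ n = (nc_gf Q1 + nc_gf Q2) $ n"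
    by (simp add: nc_gf_def)
qed

lemma nc_pair_gf_disj:
  assumes "\<And>u w. nc_partition u \<Longrightarrow> nc_partition w \<Longrightarrow> P1 u w \<Longrightarrow> \<not> P2 u w"
  shows "nc_pair_gf (\<lambda>u w. P1 u w \<or> P2 u w) = nc_pair_gf P1 + nc_pair_gf P2"
proof (rule fps_ext)
  fix n
  let ?S = "\<lambda>P. {(u, w). nc_partition u \<and> nc_partition w \<and> length u + length w = n \<and> P u w}"
  have "?S (\<lambda>u w. P1 u w \<or> P2 u w) = ?S P1 \<union> ?S P2" by auto
  then have "nc_pair_card (\<lambda>u w. P1 u w \<or> P2 u w) n = nc_pair_card P1 n + nc_pair_card P2 n"
    unfolding nc_pair_card_def using assms
    by (simp only:) (rule card_Un_disjoint, auto simp: finite_nc_pairs)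
  then show "nc_pair_gf (\<lambda>u w. P1 u w \<or> P2 u w) $ n = (nc_pair_gf P1 + nc_pair_gf P2) $ n"
    by (simp add: nc_pair_gf_def)
qed

lemma nc_pair_gf_mult: "nc_pair_gf (\<lambda>u w. Q1 u \<and> Q2 w) = nc_gf Q1 * nc_gf Q2"
proof (rule fps_ext)
  fix n
  let ?A = "\<lambda>Q k. {w. nc_partition w \<and> length w = k \<and> Q w}"
  have "{(u, w). nc_partition u \<and> nc_partition w \<and> length u + length w = n \<and> Q1 u \<and> Q2 w}
      = (\<Union>k\<in>{0..n}. ?A Q1 k \<times> ?A Q2 (n - k))"
    by auto
  then have "nc_pair_card (\<lambda>u w. Q1 u \<and> Q2 w) n = (\<Sum>k=0..n. card (?A Q1 k \<times> ?A Q2 (n - k)))"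
    unfolding nc_pair_card_def
    by (simp only:) (rule card_UN_disjoint, auto simp: finite_nc_partitions)
  also have "\<dots> = (\<Sum>k=0..n. nc_card Q1 k * nc_card Q2 (n - k))"
    by (simp add: card_cartesian_product nc_card_def)
  finally show "nc_pair_gf (\<lambda>u w. Q1 u \<and> Q2 w) $ n = (nc_gf Q1 * nc_gf Q2) $ n"
    by (simp add: nc_pair_gf_def nc_gf_def fps_mult_nth)
qed

lemma nc_card_Suc: "nc_card Q (Suc n) = nc_pair_card (\<lambda>u w. Q (arc_join u w)) n"
proof -
  let ?A = "{(u, w). nc_partition u \<and> nc_partition w \<and> length u + length w = n \<and> Q (arc_join u w)}"
  have inj: "inj_on (\<lambda>(u, w). arc_join u w) ?A"
    by (rule inj_onI) (auto simp: nc_partition_def dest: arc_join_inj)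
  have img: "(\<lambda>(u, w). arc_join u w) ` ?A = {v. nc_partition v \<and> length v = Suc n \<and> Q v}"
  proof safe
    fix u w assume "nc_partition u" "nc_partition w"
    then show "nc_partition (arc_join u w)"
      by (simp add: nc_partition_def rgs_arc_join noncrossing_arc_join)
  next
    fix v assume v: "nc_partition v" "length v = Suc n" "Q v"
    then have "rgs v" "noncrossing v" "v \<noteq> []" by (auto simp: nc_partition_def)
    then obtain u w where "rgs u" "noncrossing u" "rgs w" "noncrossing w" "v = arc_join u w"
      by (rule arc_join_surj)
    with v show "v \<in> (\<lambda>(u, w). arc_join u w) ` ?A" by (force simp: nc_partition_def)
  qed auto
  show ?thesis unfolding nc_card_def nc_pair_card_def using card_image[OF inj] img by simp
qed

lemma nc_gf_arc_join:
  "nc_gf Q = (if Q [] then 1 else 0) + fps_X * nc_pair_gf (\<lambda>u w. Q (arc_join u w))"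
proof (rule fps_ext)
  fix n show "nc_gf Q $ n = ((if Q [] then 1 else 0) + fps_X * nc_pair_gf (\<lambda>u w. Q (arc_join u w))) $ n"
  proof (cases n)
    case 0
    then have "{w. nc_partition w \<and> length w = n \<and> Q w} = (if Q [] then {[]} else {})" by auto
    then show ?thesis using 0 by (simp add: nc_gf_def nc_card_def)
  next
    case (Suc m)
    then show ?thesis by (simp add: nc_gf_def nc_pair_gf_def nc_card_Suc)
  qed
qed


lemma append_Cons_eq_append_notin_left:
  assumes "xs @ c # ys = as @ bs" "c \<notin> set as"
  obtains t where "xs = as @ t" "bs = t @ c # ys"
  using assms by (auto simp: append_eq_append_conv2 Cons_eq_append_conv)

lemma append_Cons_eq_append_notin_right:
  assumes "xs @ c # ys = as @ bs" "c \<notin> set bs"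
  obtains t where "as = xs @ c # t" "ys = t @ bs"
  using assms by (auto simp: append_eq_append_conv2 Cons_eq_append_conv)

lemma contains_delete_block1:
  assumes "rgs w" "subseq s (map (raise_above_1 k) w)" "\<forall>y\<in>set s. 1 < y" "order_iso s \<tau>"
  shows "contains (delete_block1 w) \<tau>"
proof -
  have "subseq (filter (\<lambda>x. x \<noteq> 1) s) (filter (\<lambda>x. x \<noteq> 1) (map (raise_above_1 k) w))"
    using assms(2) by (rule subseq_filter)
  moreover have "filter (\<lambda>x. x \<noteq> 1) s = s" using assms(3) by (auto intro: filter_True)
  ultimately have "subseq s (shift (Suc k) (delete_block1 w))"
    using filter_map_raise_above_1[OF assms(1)] by simp
  then have "contains (shift (Suc k) (delete_block1 w)) \<tau>" using assms(4) by (auto simp: contains_def)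
  then show ?thesis by simp
qed

lemma contains_arc_join_Nil_iff:
  assumes "rgs \<sigma>" "rgs \<tau>" "rgs u"
  shows "contains (arc_join u []) (one_br_one_br \<sigma> \<tau>) \<longleftrightarrow> contains u (one_br_one_br \<sigma> \<tau>)"
proof
  assume "contains (arc_join u []) (one_br_one_br \<sigma> \<tau>)"
  then obtain c s1 s2 where occ: "nested_occurrence \<sigma> \<tau> c s1 s2"
    and sub: "subseq (c # s1 @ c # s2) (1 # shift 1 u)"
    by (auto simp: contains_one_br_one_br_iff[OF assms(1,2)] arc_join_def)
  have "1 \<notin> set (shift 1 u)" using set_shift_1_rgs[OF assms(3)] by fastforce
  then have "subseq (c # s1 @ c # s2) (shift 1 u)"
    using sub by (cases "c = 1") (auto dest: set_subseq)
  then have "contains (shift 1 u) (one_br_one_br \<sigma> \<tau>)"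
    using occ contains_one_br_one_br_iff[OF assms(1,2)] by blast
  then show "contains u (one_br_one_br \<sigma> \<tau>)" by simp
next
  assume "contains u (one_br_one_br \<sigma> \<tau>)"
  moreover have "subseq (shift 1 u) (arc_join u [])"
    unfolding arc_join_def by (intro list_emb_Cons subseq_rev_drop_many subseq_order.order_refl)
  ultimately show "contains (arc_join u []) (one_br_one_br \<sigma> \<tau>)"
    using contains_subseq contains_shift_iff by blast
qed

lemma arc_join_occurrence_at_1:
  assumes \<sigma>: "rgs \<sigma>" "\<sigma> = [] \<or> connected_part \<sigma>" and \<tau>: "rgs \<tau>"
    and u: "rgs u" and w: "rgs w" "w \<noteq> []"
    and occ: "nested_occurrence \<sigma> \<tau> 1 s1 s2" and sub: "subseq (1 # s1 @ 1 # s2) (arc_join u w)"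
  shows "contains w (one_br_one_br \<sigma> \<tau>) \<or> contains u \<sigma> \<and> contains (delete_block1 w) \<tau>"
proof -
  let ?U = "shift 1 u" and ?W = "map (raise_above_1 (nblocks u)) w"
  have iso: "order_iso s1 \<sigma>" "order_iso s2 \<tau>" and gt: "\<forall>y\<in>set s1. 1 < y" "\<forall>y\<in>set s2. 1 < y"
    using occ by (simp_all add: nested_occurrence_def)
  from sub have "subseq (s1 @ 1 # s2) (?U @ ?W)" by (simp add: arc_join_def)
  then obtain x1 x2 where x: "s1 @ 1 # s2 = x1 @ x2" "subseq x1 ?U" "subseq x2 ?W"
    by (auto elim: subseq_appendE)
  have "1 \<notin> set x1" using set_subseq[OF x(2)] set_shift_1_rgs[OF u] by fastforce
  with x(1) obtain t where t: "s1 = x1 @ t" "x2 = t @ 1 # s2"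
    by (rule append_Cons_eq_append_notin_left)
  have "a < b" if "a \<in> set x1" "b \<in> set t" for a b
    using that set_subseq[OF x(2)] set_subseq[OF x(3)] t gt(1)
    by (intro shift_1_less_raise_above_1[OF u w(1)]) auto
  then have "x1 = [] \<or> t = []" using connected_order_iso_split[OF \<sigma>] iso(1) t(1) by blast
  then consider "t = []" | "x1 = []" "t \<noteq> []" by blast
  then show ?thesis
  proof cases
    case 1
    then have "contains ?U \<sigma>" using x(2) t(1) iso(1) by (auto simp: contains_def)
    moreover have "subseq s2 ?W" using x(3) t(2) 1 by (auto intro: subseq_Cons')
    then have "contains (delete_block1 w) \<tau>"
      using contains_delete_block1[OF w(1) _ gt(2) iso(2)] by blast
    ultimately show ?thesis by simp
  next
    case 2
    then obtain a s1' where s1: "s1 = a # s1'" "a \<noteq> 1" using t(1) gt(1) by (cases s1) auto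
    have W: "?W = 1 # map (raise_above_1 (nblocks u)) (tl w)"
      by (rule map_raise_above_1_Cons[OF w])
    have "subseq (s1 @ 1 # s2) ?W" using x(3) t 2 by simp
    then have "subseq (1 # s1 @ 1 # s2) ?W" using s1 W by simp
    then have "contains ?W (one_br_one_br \<sigma> \<tau>)"
      using occ contains_one_br_one_br_iff[OF \<sigma>(1) \<tau>] by blast
    then show ?thesis using contains_map_raise_above_1_iff[OF w(1)] by blast
  qed
qed

lemma arc_join_occurrence_above_1:
  assumes \<sigma>: "rgs \<sigma>" and \<tau>: "rgs \<tau>" "\<tau> = [] \<or> connected_part \<tau>" and u: "rgs u" and w: "rgs w"
    and occ: "nested_occurrence \<sigma> \<tau> c s1 s2" and sub: "subseq (c # s1 @ c # s2) (arc_join u w)"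
    and "c \<noteq> 1"
  shows "contains u (one_br_one_br \<sigma> \<tau>) \<or> contains w (one_br_one_br \<sigma> \<tau>) \<or>
    contains u \<sigma> \<and> contains (delete_block1 w) \<tau>"
proof -
  let ?U = "shift 1 u" and ?W = "map (raise_above_1 (nblocks u)) w"
  have iso: "order_iso s1 \<sigma>" "order_iso s2 \<tau>" and gt: "\<forall>y\<in>set s2. c < y"
    using occ by (simp_all add: nested_occurrence_def)
  have occ_in: "contains v (one_br_one_br \<sigma> \<tau>)" if "subseq (c # s1 @ c # s2) v" for v
    using that occ contains_one_br_one_br_iff[OF \<sigma> \<tau>(1)] by blast
  from sub \<open>c \<noteq> 1\<close> have "subseq (c # s1 @ c # s2) (?U @ ?W)" by (simp add: arc_join_def)
  then obtain x1 x2 where x: "c # s1 @ c # s2 = x1 @ x2" "subseq x1 ?U" "subseq x2 ?W"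
    by (auto elim: subseq_appendE)
  show ?thesis
  proof (cases "x1 = []")
    case True
    then show ?thesis using x occ_in contains_map_raise_above_1_iff[OF w] by auto
  next
    case False
    then obtain x1' where x1: "x1 = c # x1'" using x(1) by (cases x1) auto
    then have c: "2 \<le> c" "c \<le> Suc (nblocks u)" using set_shift_1_rgs[OF u] set_subseq[OF x(2)] by auto
    then have "c \<notin> set x2" using set_map_raise_above_1[OF w] set_subseq[OF x(3)] by fastforce
    moreover have "s1 @ c # s2 = x1' @ x2" using x(1) x1 by simp
    ultimately obtain t where t: "x1' = s1 @ c # t" "s2 = t @ x2"
      by (metis append_Cons_eq_append_notin_right)
    have "a < b" if "a \<in> set t" "b \<in> set x2" for a b
    proof (rule shift_1_less_raise_above_1[OF u w])
      show "a \<in> set ?U" using that(1) set_subseq[OF x(2)] x1 t by auto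
      show "b \<in> set ?W" using that(2) set_subseq[OF x(3)] by auto
      show "b \<noteq> 1" using that(2) gt t(2) c by fastforce
    qed
    then have "t = [] \<or> x2 = []" using connected_order_iso_split[OF \<tau>] iso(2) t(2) by blast
    then show ?thesis
    proof
      assume "x2 = []"
      then have "subseq (c # s1 @ c # s2) ?U" using x(2) x1 t by simp
      then show ?thesis using occ_in contains_shift_iff by blast
    next
      assume "t = []"
      have "subseq s1 (c # s1 @ c # t)"
        by (intro list_emb_Cons subseq_rev_drop_many subseq_order.order_refl)
      then have "subseq s1 x1" using x1 t by simp
      then have "contains ?U \<sigma>"
        using x(2) iso(1) subseq_order.order_trans unfolding contains_def by blast
      moreover have "\<forall>y\<in>set s2. 1 < y" using gt c by auto
      then have "contains (delete_block1 w) \<tau>"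
        using contains_delete_block1[OF w _ _ iso(2)] x(3) t \<open>t = []\<close> by simp
      ultimately show ?thesis by simp
    qed
  qed
qed

lemma contains_arc_join_of_split:
  assumes \<sigma>: "rgs \<sigma>" and \<tau>: "rgs \<tau>" and u: "rgs u" and w: "rgs w" "w \<noteq> []"
    and "contains u \<sigma>" "contains (delete_block1 w) \<tau>"
  shows "contains (arc_join u w) (one_br_one_br \<sigma> \<tau>)"
proof -
  let ?k = "nblocks u"
  obtain s1 where s1: "subseq s1 u" "order_iso s1 \<sigma>" using assms(6) by (auto simp: contains_def)
  obtain s2 where s2: "subseq s2 (delete_block1 w)" "order_iso s2 \<tau>"
    using assms(7) by (auto simp: contains_def)
  have "subseq (shift (Suc ?k) s2) (filter (\<lambda>x. x \<noteq> 1) (map (raise_above_1 ?k) (tl w)))"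
    using subseq_map[OF s2(1)] filter_map_raise_above_1[OF w(1)] map_raise_above_1_Cons[OF w]
    by (simp add: shift_def)
  then have "subseq (shift (Suc ?k) s2) (map (raise_above_1 ?k) (tl w))"
    using subseq_filter_left subseq_order.order_trans by blast
  moreover have "subseq (shift 1 s1) (shift 1 u)" using subseq_map[OF s1(1)] by (simp add: shift_def)
  ultimately have "subseq (shift 1 s1 @ 1 # shift (Suc ?k) s2)
      (shift 1 u @ 1 # map (raise_above_1 ?k) (tl w))"
    by (intro list_emb_append_mono list_emb_Cons2) simp_all
  then have "subseq (1 # shift 1 s1 @ 1 # shift (Suc ?k) s2) (arc_join u w)"
    using map_raise_above_1_Cons[OF w] by (simp add: arc_join_def)
  moreover have "nested_occurrence \<sigma> \<tau> 1 (shift 1 s1) (shift (Suc ?k) s2)"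
  proof -
    have iso_shift: "order_iso (shift k s) p \<longleftrightarrow> order_iso s p" for k s p
      by (simp add: order_iso_def shift_def)
    have low: "1 < y \<and> y \<le> Suc ?k" if "y \<in> set (shift 1 s1)" for y
      using that set_subseq[OF s1(1)] rgs_pos[OF u] rgs_le_nblocks[OF u] by (fastforce simp: shift_def)
    have high: "Suc ?k < y" if "y \<in> set (shift (Suc ?k) s2)" for y
      using that set_subseq[OF s2(1)] set_delete_block1_rgs[OF w(1)] by (fastforce simp: shift_def)
    show ?thesis unfolding nested_occurrence_def
    proof (intro conjI ballI)
      show "order_iso (shift 1 s1) \<sigma>" "order_iso (shift (Suc ?k) s2) \<tau>"
        using s1(2) s2(2) iso_shift by blast+
    next
      fix y assume "y \<in> set (shift 1 s1)"
      then show "1 < y" using low by blast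
    next
      fix y assume "y \<in> set (shift (Suc ?k) s2)"
      then show "1 < y" using high by fastforce
    next
      fix y z assume "y \<in> set (shift 1 s1)" "z \<in> set (shift (Suc ?k) s2)"
      then show "y < z" using low high by fastforce
    qed
  qed
  ultimately show ?thesis using contains_one_br_one_br_iff[OF \<sigma> \<tau>] by blast
qed

lemma contains_arc_join_iff:
  assumes \<sigma>: "rgs \<sigma>" "\<sigma> = [] \<or> connected_part \<sigma>" and \<tau>: "rgs \<tau>" "\<tau> = [] \<or> connected_part \<tau>"
    and u: "rgs u" and w: "rgs w" "w \<noteq> []"
  shows "contains (arc_join u w) (one_br_one_br \<sigma> \<tau>) \<longleftrightarrow>
    contains u (one_br_one_br \<sigma> \<tau>) \<or> contains w (one_br_one_br \<sigma> \<tau>) \<or>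
    contains u \<sigma> \<and> contains (delete_block1 w) \<tau>"
proof
  assume "contains (arc_join u w) (one_br_one_br \<sigma> \<tau>)"
  then obtain c s1 s2 where "nested_occurrence \<sigma> \<tau> c s1 s2" "subseq (c # s1 @ c # s2) (arc_join u w)"
    using contains_one_br_one_br_iff[OF \<sigma>(1) \<tau>(1)] by blast
  then show "contains u (one_br_one_br \<sigma> \<tau>) \<or> contains w (one_br_one_br \<sigma> \<tau>) \<or>
      contains u \<sigma> \<and> contains (delete_block1 w) \<tau>"
    using arc_join_occurrence_at_1[OF \<sigma> \<tau>(1) u w] arc_join_occurrence_above_1[OF \<sigma>(1) \<tau> u w(1)]
    by (cases "c = 1") auto
next
  have "subseq (shift 1 u) (arc_join u w)"
    unfolding arc_join_def by (intro list_emb_Cons subseq_rev_drop_many subseq_order.order_refl)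
  moreover have "subseq (map (raise_above_1 (nblocks u)) w) (arc_join u w)"
    unfolding arc_join_def by (intro list_emb_Cons subseq_drop_many subseq_order.order_refl)
  moreover assume "contains u (one_br_one_br \<sigma> \<tau>) \<or> contains w (one_br_one_br \<sigma> \<tau>) \<or>
      contains u \<sigma> \<and> contains (delete_block1 w) \<tau>"
  ultimately show "contains (arc_join u w) (one_br_one_br \<sigma> \<tau>)"
    using contains_arc_join_of_split[OF \<sigma>(1) \<tau>(1) u w] contains_subseq contains_shift_iff
      contains_map_raise_above_1_iff[OF w(1)]
    by metis
qed


section \<open>Generating functions\<close>

lemma nc_pair_gf_False: "nc_pair_gf (\<lambda>u w. False) = 0"
  by (simp add: nc_pair_gf_def nc_pair_card_def fps_zero_def)

lemma nc_gf_Nil: "nc_gf (\<lambda>w. w = []) = 1"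
  using nc_gf_arc_join[of "\<lambda>w. w = []"] by (simp add: arc_join_def nc_pair_gf_False)

lemma nc_gf_conj_eq_diff:
  assumes "\<And>w. nc_partition w \<Longrightarrow> \<not> Q w \<Longrightarrow> R w"
  shows "nc_gf (\<lambda>w. Q w \<and> R w) = nc_gf R - nc_gf (\<lambda>w. \<not> Q w)"
proof -
  have "nc_gf R = nc_gf (\<lambda>w. \<not> Q w \<or> Q w \<and> R w)"
    using assms by (intro nc_gf_cong) blast
  also have "\<dots> = nc_gf (\<lambda>w. \<not> Q w) + nc_gf (\<lambda>w. Q w \<and> R w)"
    by (rule nc_gf_disj) simp
  finally show ?thesis by simp
qed

lemma nc_gf_avoiding_without_block1:
  assumes \<sigma>: "rgs \<sigma>" "\<sigma> = [] \<or> connected_part \<sigma>" and \<tau>: "rgs \<tau>" "\<tau> = [] \<or> connected_part \<tau>"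
  defines "W \<equiv> nc_gf (\<lambda>w. w \<noteq> [] \<and> \<not> contains w (one_br_one_br \<sigma> \<tau>) \<and>
                          \<not> contains (delete_block1 w) \<tau>)"
  shows "W = fps_X * nc_gf (\<lambda>w. \<not> contains w \<tau>) * (1 + W)"
proof -
  let ?p = "one_br_one_br \<sigma> \<tau>"
  let ?\<Omega> = "\<lambda>w. w \<noteq> [] \<and> \<not> contains w ?p \<and> \<not> contains (delete_block1 w) \<tau>"
  have avoid_p: "\<not> contains u \<tau> \<Longrightarrow> \<not> contains u ?p" for u
    using contains_trans contains_one_br_one_br_right by blast
  have "?\<Omega> (arc_join u w) \<longleftrightarrow> \<not> contains u \<tau> \<and> w = [] \<or> \<not> contains u \<tau> \<and> ?\<Omega> w"
    if "nc_partition u" "nc_partition w" for u w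
  proof -
    have u: "rgs u" and w: "rgs w" using that by (simp_all add: nc_partition_def)
    have "contains (delete_block1 (arc_join u w)) \<tau> \<longleftrightarrow>
        contains u \<tau> \<or> contains (delete_block1 w) \<tau>"
      unfolding delete_block1_arc_join[OF u w]
      by (rule contains_bconcat_iff[OF u _ \<tau>]) (use set_delete_block1_rgs[OF w] in blast)
    moreover have "arc_join u w \<noteq> []" by (simp add: arc_join_def)
    moreover have "delete_block1 [] = []" by (simp add: delete_block1_def)
    ultimately show ?thesis
      using contains_arc_join_Nil_iff[OF \<sigma>(1) \<tau>(1) u] contains_arc_join_iff[OF \<sigma> \<tau> u w] avoid_p
      by (cases "w = []") (auto simp: contains_Nil_iff)
  qed
  then have "nc_pair_gf (\<lambda>u w. ?\<Omega> (arc_join u w)) =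
      nc_pair_gf (\<lambda>u w. \<not> contains u \<tau> \<and> w = [] \<or> \<not> contains u \<tau> \<and> ?\<Omega> w)"
    by (rule nc_pair_gf_cong)
  also have "\<dots> = nc_pair_gf (\<lambda>u w. \<not> contains u \<tau> \<and> w = []) + nc_pair_gf (\<lambda>u w. \<not> contains u \<tau> \<and> ?\<Omega> w)"
    by (rule nc_pair_gf_disj) simp
  also have "\<dots> = nc_gf (\<lambda>w. \<not> contains w \<tau>) * (1 + W)"
    by (simp add: nc_pair_gf_mult nc_gf_Nil W_def algebra_simps)
  finally show ?thesis
    using nc_gf_arc_join[of ?\<Omega>] by (simp add: W_def mult.assoc)
qed

lemma nc_gf_avoiding_one_br_one_br_rec:
  assumes \<sigma>: "rgs \<sigma>" "\<sigma> = [] \<or> connected_part \<sigma>" and \<tau>: "rgs \<tau>" "\<tau> = [] \<or> connected_part \<tau>"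
  defines "V \<equiv> nc_gf (\<lambda>w. \<not> contains w (one_br_one_br \<sigma> \<tau>))"
    and "A \<equiv> nc_gf (\<lambda>w. \<not> contains w \<sigma>)"
    and "W \<equiv> nc_gf (\<lambda>w. w \<noteq> [] \<and> \<not> contains w (one_br_one_br \<sigma> \<tau>) \<and>
                          \<not> contains (delete_block1 w) \<tau>)"
  shows "V = 1 + fps_X * (V + A * (V - 1) + (V - A) * W)"
proof -
  let ?p = "one_br_one_br \<sigma> \<tau>"
  let ?\<Omega> = "\<lambda>w. w \<noteq> [] \<and> \<not> contains w ?p \<and> \<not> contains (delete_block1 w) \<tau>"
  have avoid_p: "\<not> contains u \<sigma> \<Longrightarrow> \<not> contains u ?p" for u
    using contains_trans contains_one_br_one_br_left by blast
  have "\<not> contains [] ?p" by (simp add: contains_Nil_iff one_br_one_br_def)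
  then have V1: "nc_gf (\<lambda>w. w \<noteq> [] \<and> \<not> contains w ?p) = V - 1"
    using nc_gf_conj_eq_diff[of "\<lambda>w. w \<noteq> []" "\<lambda>w. \<not> contains w ?p"] by (simp add: nc_gf_Nil V_def)
  have VA: "nc_gf (\<lambda>w. contains w \<sigma> \<and> \<not> contains w ?p) = V - A"
    unfolding V_def A_def using avoid_p by (rule nc_gf_conj_eq_diff)
  let ?P1 = "\<lambda>u w. \<not> contains u ?p \<and> w = []"
  let ?P2 = "\<lambda>u w. \<not> contains u \<sigma> \<and> (w \<noteq> [] \<and> \<not> contains w ?p)"
  let ?P3 = "\<lambda>u w. (contains u \<sigma> \<and> \<not> contains u ?p) \<and> ?\<Omega> w"
  have "\<not> contains (arc_join u w) ?p \<longleftrightarrow> ?P1 u w \<or> ?P2 u w \<or> ?P3 u w"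
    if "nc_partition u" "nc_partition w" for u w
  proof -
    have u: "rgs u" and w: "rgs w" using that by (simp_all add: nc_partition_def)
    show ?thesis
      using contains_arc_join_Nil_iff[OF \<sigma>(1) \<tau>(1) u] contains_arc_join_iff[OF \<sigma> \<tau> u w] avoid_p
      by (cases "w = []") auto
  qed
  then have "nc_pair_gf (\<lambda>u w. \<not> contains (arc_join u w) ?p) =
      nc_pair_gf (\<lambda>u w. ?P1 u w \<or> ?P2 u w \<or> ?P3 u w)"
    by (rule nc_pair_gf_cong)
  also have "\<dots> = nc_pair_gf ?P1 + nc_pair_gf (\<lambda>u w. ?P2 u w \<or> ?P3 u w)"
    by (rule nc_pair_gf_disj) auto
  also have "nc_pair_gf (\<lambda>u w. ?P2 u w \<or> ?P3 u w) = nc_pair_gf ?P2 + nc_pair_gf ?P3"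
    by (rule nc_pair_gf_disj) auto
  also have "nc_pair_gf ?P1 = V"
    using nc_pair_gf_mult[of "\<lambda>u. \<not> contains u ?p" "\<lambda>w. w = []"] by (simp add: nc_gf_Nil V_def)
  also have "nc_pair_gf ?P2 = A * (V - 1)"
    using nc_pair_gf_mult[of "\<lambda>u. \<not> contains u \<sigma>"] V1 by (simp add: A_def)
  also have "nc_pair_gf ?P3 = (V - A) * W"
    using nc_pair_gf_mult[of "\<lambda>u. contains u \<sigma> \<and> \<not> contains u ?p" ?\<Omega>] VA by (simp add: W_def)
  finally have pairs: "nc_pair_gf (\<lambda>u w. \<not> contains (arc_join u w) ?p) = V + (A * (V - 1) + (V - A) * W)" .
  have "V = 1 + fps_X * nc_pair_gf (\<lambda>u w. \<not> contains (arc_join u w) ?p)"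
    using nc_gf_arc_join[of "\<lambda>w. \<not> contains w ?p"] \<open>\<not> contains [] ?p\<close> by (simp add: V_def)
  then have "V = 1 + fps_X * (V + (A * (V - 1) + (V - A) * W))" by (simp only: pairs)
  then show ?thesis by (simp only: add.assoc)
qed

lemma nc_gf_avoiding_one_br_one_br:
  assumes "rgs \<sigma>" "\<sigma> = [] \<or> connected_part \<sigma>" "rgs \<tau>" "\<tau> = [] \<or> connected_part \<tau>"
  defines "V \<equiv> nc_gf (\<lambda>w. \<not> contains w (one_br_one_br \<sigma> \<tau>))"
    and "A \<equiv> nc_gf (\<lambda>w. \<not> contains w \<sigma>)" and "B \<equiv> nc_gf (\<lambda>w. \<not> contains w \<tau>)"
  shows "V * (1 - fps_X - fps_X * A - fps_X * B + fps_X\<^sup>2 * A * B) = 1 - fps_X * A - fps_X * B"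
proof -
  let ?X = "fps_X :: int fps"
  define W where "W = nc_gf (\<lambda>w. w \<noteq> [] \<and> \<not> contains w (one_br_one_br \<sigma> \<tau>) \<and>
                                   \<not> contains (delete_block1 w) \<tau>)"
  have V: "V = 1 + ?X * (V + A * (V - 1) + (V - A) * W)"
    unfolding V_def A_def W_def by (rule nc_gf_avoiding_one_br_one_br_rec[OF assms(1-4)])
  have W: "W = ?X * B * (1 + W)"
    unfolding B_def W_def by (rule nc_gf_avoiding_without_block1[OF assms(1-4)])
  \<comment> \<open>Eliminating \<open>W\<close>: the difference of the two sides is a combination of the two equations.\<close>
  have "V * (1 - ?X - ?X * A - ?X * B + ?X\<^sup>2 * A * B) - (1 - ?X * A - ?X * B)
      = (1 - ?X * B) * (V - (1 + ?X * (V + A * (V - 1) + (V - A) * W)))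
        + (?X * V - ?X * A) * (W - ?X * B * (1 + W))"
    by (simp add: algebra_simps power2_eq_square)
  also have "\<dots> = 0" using V W by simp
  finally show ?thesis by simp
qed

lemma nc_count_eq_nc_card: "nc_count p n = nc_card (\<lambda>w. \<not> contains w p) n"
  unfolding nc_count_def nc_card_def nc_partition_def noncrossing_def avoids_def
  by (rule arg_cong[where f = card]) auto

theorem theorem3p7:
  fixes \<sigma> \<tau> :: "nat list"
  assumes "rgs \<sigma>" and "noncrossing \<sigma>" and "\<sigma> = [] \<or> connected_part \<sigma>"
      and "rgs \<tau>" and "noncrossing \<tau>" and "\<tau> = [] \<or> connected_part \<tau>"
  shows "\<forall>n. nc_count (one_br_one_br \<sigma> \<tau>) n = nc_count (one_br_one_br \<tau> \<sigma>) n"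
proof
  fix n
  let ?X = "fps_X :: int fps"
  let ?V = "\<lambda>\<sigma> \<tau>. nc_gf (\<lambda>w. \<not> contains w (one_br_one_br \<sigma> \<tau>))"
  define A where "A = nc_gf (\<lambda>w. \<not> contains w \<sigma>)"
  define B where "B = nc_gf (\<lambda>w. \<not> contains w \<tau>)"
  define Q where "Q = 1 - ?X - ?X * A - ?X * B + ?X\<^sup>2 * A * B"
  have "?V \<sigma> \<tau> * Q = 1 - ?X * A - ?X * B"
    unfolding Q_def A_def B_def by (rule nc_gf_avoiding_one_br_one_br[OF assms(1,3,4,6)])
  moreover have "?V \<tau> \<sigma> * Q = 1 - ?X * A - ?X * B"
    using nc_gf_avoiding_one_br_one_br[OF assms(4,6,1,3)]
    unfolding Q_def A_def B_def by (simp add: algebra_simps)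
  moreover have "Q \<noteq> 0"
  proof
    assume "Q = 0"
    then have "Q $ 0 = 0" by simp
    then show False by (simp add: Q_def)
  qed
  ultimately have "?V \<sigma> \<tau> = ?V \<tau> \<sigma>" using mult_right_cancel[of Q] by metis
  then have "?V \<sigma> \<tau> $ n = ?V \<tau> \<sigma> $ n" by simp
  then show "nc_count (one_br_one_br \<sigma> \<tau>) n = nc_count (one_br_one_br \<tau> \<sigma>) n"
    by (simp add: nc_gf_def nc_count_eq_nc_card)
qed

end
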